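(* Let $\Gamma$ be finite and $\alpha\in V$. The noncommutative formal power series $$P^\alpha-\mu(\alpha)\alpha=\sum_{\substack{n\ge1,\ \epsilon_1\cdots\epsilon_n\text{ a loop in }\vec\Gamma\\ \text{based at }\alpha}}\mathrm{Tr}(X_{\epsilon_1}\cdots X_{\epsilon_n})\,\epsilon_1\cdots\epsilon_n\ \in\ \mathbb C\langle\langle\mathscr X\rangle\rangle$$ is algebraic.
   Context: $\Gamma$ is a finite connected undirected graph (loops, multiple edges allowed), vertex set $V$, weighting $\mu:V\to(0,\infty)$. Directed version $\vec\Gamma$ (edge set $\vec E$): each edge with distinct endpoints $\alpha\ne\beta$ yields $\epsilon,\epsilon^{op}$ with $s(\epsilon)=t(\epsilon^{op})=\alpha$, $t(\epsilon)=s(\epsilon^{op})=\beta$; each loop yields one directed loop $\epsilon=\epsilon^{op}$. $\mathcal C=C_0(V)$, $p_\alpha$ indicator of $\alpha$; $\mathcal X$ the Hilbert $\mathcal C$-$\mathcal C$ bimodule spanned by directed edges with $p_\alpha\epsilon=\delta_{s(\epsilon),\alpha}\epsilon$, $\epsilon p_\alpha=\delta_{t(\epsilon),\alpha}\epsilon$, $\langle\epsilon'|\epsilon\rangle=\delta_{\epsilon,\epsilon'}p_{t(\epsilon)}$; $\mathcal F(\mathcal X)$ its full Fock space with creation operators $\ell(\xi)$. For a loop $e$: $X_e=\ell(\epsilon)+\ell(\epsilon)^*$; for $e$ with endpoints $\alpha\ne\beta$: $a_\epsilon=(\mu(\alpha)/\mu(\beta))^{1/4}$, $X_e=a_\epsilon\ell(\epsilon)+a_\epsilon^{-1}\ell(\epsilon^{op})^*+a_\epsilon^{-1}\ell(\epsilon^{op})+a_\epsilon\ell(\epsilon)^*$;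 $X_\epsilon=p_{s(\epsilon)}X_ep_{t(\epsilon)}$. $\mathrm{Tr}=\mathrm{tr}\circ E$ with $E(x)=PxP$ ($P$ projection onto $\mathcal C$), $\mathrm{tr}(p_v)=\mu(v)$. A loop based at $\alpha$ is a sequence $\epsilon_1,\dots,\epsilon_n$ with $s(\epsilon_1)=\alpha=t(\epsilon_n)$ and $t(\epsilon_k)=s(\epsilon_{k+1})$. Noncommutative series: $\mathscr X=\vec E\cup V$ is a finite alphabet (letters $\epsilon$ and $\alpha$). For a ring $R$ and alphabet $X$, $R\langle\langle X\rangle\rangle$ is the ring of formal sums $\sum_{w}P_ww$ over words $w$ in $X$ (empty word $\mathbf 1$) with coefficients in $R$, with product $(PQ)_w=\sum_{w=uv}P_uQ_v$; $R\langle X\rangle$ is the subring of finite sums. Given a disjoint alphabet $Z=\{z_1,\dots,z_m\}$, a proper algebraic system is a set of equations $z_i=p_i(X,Z)$ with $p_i\in R\langle X\cup Z\rangle$ having no constant term and no term of the form $c z_j$; a solution is $(P_1,\dots,P_m)\in R\langle\langle X\rangle\rangle^m$ with $(P_i)_{\mathbf 1}=0$ and $P_i=p_i(X,P_1,\dots,P_m)$. $P$ is algebraic if $P-P_{\mathbf 1}\mathbf 1$ is a component of a solution of some proper algebraic system. $P^\alpha$ denotes the series $\mu(\alpha)\alpha+\sum_{\text{loops based at }\alpha}\mathrm{Tr}(X_{\epsilon_1}\cdots X_{\epsilon_n})\epsilon_1\cdots\epsilon_n$. *)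

theory Defs
  imports Complex_Main
begin

type_synonym ('x, 'r) ncseries = "'x list \<Rightarrow> 'r"

definition ncs_mult :: "('x, 'r::comm_ring_1) ncseries \<Rightarrow> ('x, 'r) ncseries \<Rightarrow> ('x, 'r) ncseries" where
  "ncs_mult P Q = (\<lambda>w. \<Sum>i\<le>length w. P (take i w) * Q (drop i w))"

definition ncs_one :: "('x, 'r::comm_ring_1) ncseries" where
  "ncs_one = (\<lambda>w. if w = [] then 1 else 0)"

definition ncs_letter :: "'x \<Rightarrow> ('x, 'r::comm_ring_1) ncseries" where
  "ncs_letter x = (\<lambda>w. if w = [x] then 1 else 0)"

fun ncs_word_eval :: "('y \<Rightarrow> ('x, 'r::comm_ring_1) ncseries) \<Rightarrow> 'y list \<Rightarrow> ('x, 'r) ncseries" where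
  "ncs_word_eval \<sigma> [] = ncs_one"
| "ncs_word_eval \<sigma> (a # u) = ncs_mult (\<sigma> a) (ncs_word_eval \<sigma> u)"

definition ncs_subst :: "('y list \<Rightarrow> 'r::comm_ring_1) \<Rightarrow> ('y \<Rightarrow> ('x, 'r) ncseries) \<Rightarrow> ('x, 'r) ncseries" where
  "ncs_subst p \<sigma> = (\<lambda>w. \<Sum>u\<in>{u. p u \<noteq> 0}. p u * ncs_word_eval \<sigma> u w)"

text \<open>Noncommutative polynomials in R<X \<union> Z>, with Z = {z_0,...,z_{m-1}} encoded as Inr j.\<close>
definition proper_alg_system :: "nat \<Rightarrow> (nat \<Rightarrow> ('x + nat) list \<Rightarrow> 'r::comm_ring_1) \<Rightarrow> bool" where
  "proper_alg_system m ps \<longleftrightarrow>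
     (\<forall>i<m. finite {u. ps i u \<noteq> 0}
        \<and> (\<forall>u. ps i u \<noteq> 0 \<longrightarrow> (\<forall>j. Inr j \<in> set u \<longrightarrow> j < m))
        \<and> ps i [] = 0
        \<and> (\<forall>j. ps i [Inr j] = 0))"

definition is_alg_solution :: "nat \<Rightarrow> (nat \<Rightarrow> ('x + nat) list \<Rightarrow> 'r::comm_ring_1) \<Rightarrow> (nat \<Rightarrow> ('x, 'r) ncseries) \<Rightarrow> bool" where
  "is_alg_solution m ps Ps \<longleftrightarrow>
     (\<forall>i<m. Ps i [] = 0 \<and>
        Ps i = ncs_subst (ps i) (\<lambda>l. case l of Inl x \<Rightarrow> ncs_letter x | Inr j \<Rightarrow> Ps j))"

definition nc_algebraic :: "('x, 'r::comm_ring_1) ncseries \<Rightarrow> bool" where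
  "nc_algebraic P \<longleftrightarrow>
     (\<exists>m ps Ps i. proper_alg_system m ps \<and> is_alg_solution m ps Ps \<and> i < m \<and>
        (\<lambda>w. if w = [] then 0 else P w) = Ps i)"

text \<open>Directed graph: vertices = UNIV :: 'v, directed edges = UNIV :: 'e, with source src,
  target tgt and reversal opp.\<close>

definition graph_ok :: "('e \<Rightarrow> 'v) \<Rightarrow> ('e \<Rightarrow> 'v) \<Rightarrow> ('e \<Rightarrow> 'e) \<Rightarrow> bool" where
  "graph_ok src tgt opp \<longleftrightarrow>
     (\<forall>e. opp (opp e) = e \<and> src (opp e) = tgt e \<and> tgt (opp e) = src e
          \<and> (opp e = e \<longleftrightarrow> src e = tgt e))
     \<and> (\<forall>u v. (u, v) \<in> {(src e, tgt e) | e. True}\<^sup>*)"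

text \<open>Basis of the full Fock space F(X): a pair (ws, v) with ws a path ending at v;
  ([], v) is p_v in C = C_0(V), and (e1...en, t(en)) is e1 \<otimes> ... \<otimes> en.\<close>

type_synonym ('e, 'v) fvec = "('e list \<times> 'v) \<Rightarrow> complex"

definition fock_start :: "('e \<Rightarrow> 'v) \<Rightarrow> 'e list \<times> 'v \<Rightarrow> 'v" where
  "fock_start src b = (case fst b of [] \<Rightarrow> snd b | e # _ \<Rightarrow> src e)"

definition fcreate :: "('e \<Rightarrow> 'v) \<Rightarrow> ('e \<Rightarrow> 'v) \<Rightarrow> 'e \<Rightarrow> ('e, 'v) fvec \<Rightarrow> ('e, 'v) fvec" where
  "fcreate src tgt \<epsilon> f = (\<lambda>(ws, v). case ws of [] \<Rightarrow> 0
      | e # ws' \<Rightarrow> (if e = \<epsilon> \<and> tgt \<epsilon> = fock_start src (ws', v) then f (ws', v) else 0))"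

definition fannih :: "('e \<Rightarrow> 'v) \<Rightarrow> ('e \<Rightarrow> 'v) \<Rightarrow> 'e \<Rightarrow> ('e, 'v) fvec \<Rightarrow> ('e, 'v) fvec" where
  "fannih src tgt \<epsilon> f = (\<lambda>(ws, v). if tgt \<epsilon> = fock_start src (ws, v) then f (\<epsilon> # ws, v) else 0)"

definition fproj :: "('e \<Rightarrow> 'v) \<Rightarrow> 'v \<Rightarrow> ('e, 'v) fvec \<Rightarrow> ('e, 'v) fvec" where
  "fproj src \<alpha> f = (\<lambda>b. if fock_start src b = \<alpha> then f b else 0)"

definition edge_a :: "('v \<Rightarrow> real) \<Rightarrow> ('e \<Rightarrow> 'v) \<Rightarrow> ('e \<Rightarrow> 'v) \<Rightarrow> 'e \<Rightarrow> complex" where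
  "edge_a \<mu> src tgt \<epsilon> = complex_of_real ((\<mu> (src \<epsilon>) / \<mu> (tgt \<epsilon>)) powr (1/4))"

text \<open>X_e, written in terms of one orientation eps of e (independent of the choice).\<close>
definition X_edge :: "('v \<Rightarrow> real) \<Rightarrow> ('e \<Rightarrow> 'v) \<Rightarrow> ('e \<Rightarrow> 'v) \<Rightarrow> ('e \<Rightarrow> 'e) \<Rightarrow> 'e
    \<Rightarrow> ('e, 'v) fvec \<Rightarrow> ('e, 'v) fvec" where
  "X_edge \<mu> src tgt opp \<epsilon> f =
     (if opp \<epsilon> = \<epsilon> then (\<lambda>b. fcreate src tgt \<epsilon> f b + fannih src tgt \<epsilon> f b)
      else (let a = edge_a \<mu> src tgt \<epsilon> in
        (\<lambda>b. a * fcreate src tgt \<epsilon> f b + inverse a * fannih src tgt (opp \<epsilon>) f b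
           + inverse a * fcreate src tgt (opp \<epsilon>) f b + a * fannih src tgt \<epsilon> f b)))"

definition X_dir :: "('v \<Rightarrow> real) \<Rightarrow> ('e \<Rightarrow> 'v) \<Rightarrow> ('e \<Rightarrow> 'v) \<Rightarrow> ('e \<Rightarrow> 'e) \<Rightarrow> 'e
    \<Rightarrow> ('e, 'v) fvec \<Rightarrow> ('e, 'v) fvec" where
  "X_dir \<mu> src tgt opp \<epsilon> =
     fproj src (src \<epsilon>) \<circ> X_edge \<mu> src tgt opp \<epsilon> \<circ> fproj src (tgt \<epsilon>)"

definition fbasis :: "'e list \<times> 'v \<Rightarrow> ('e, 'v) fvec" where
  "fbasis b = (\<lambda>b'. if b' = b then 1 else 0)"

text \<open>Tr = tr o E, E(x) = P x P, tr(p_v) = mu(v).\<close>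
definition fTr :: "('v::finite \<Rightarrow> real) \<Rightarrow> (('e, 'v) fvec \<Rightarrow> ('e, 'v) fvec) \<Rightarrow> complex" where
  "fTr \<mu> T = (\<Sum>v\<in>UNIV. complex_of_real (\<mu> v) * T (fbasis ([], v)) ([], v))"

definition is_loop_at :: "('e \<Rightarrow> 'v) \<Rightarrow> ('e \<Rightarrow> 'v) \<Rightarrow> 'v \<Rightarrow> 'e list \<Rightarrow> bool" where
  "is_loop_at src tgt \<alpha> es \<longleftrightarrow> es \<noteq> [] \<and> src (hd es) = \<alpha> \<and> tgt (last es) = \<alpha>
     \<and> (\<forall>k. Suc k < length es \<longrightarrow> tgt (es ! k) = src (es ! Suc k))"

datatype ('e, 'v) gletter = ELet 'e | VLet 'v

definition P_series :: "('v::finite \<Rightarrow> real) \<Rightarrow> ('e \<Rightarrow> 'v) \<Rightarrow> ('e \<Rightarrow> 'v) \<Rightarrow> ('e \<Rightarrow> 'e) \<Rightarrow> 'v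
    \<Rightarrow> (('e, 'v) gletter, complex) ncseries" where
  "P_series \<mu> src tgt opp \<alpha> = (\<lambda>w.
     if w = [VLet \<alpha>] then complex_of_real (\<mu> \<alpha>)
     else if (\<exists>es. w = map ELet es \<and> is_loop_at src tgt \<alpha> es)
       then fTr \<mu> (foldr (\<circ>) (map (X_dir \<mu> src tgt opp) (map (\<lambda>l. case l of ELet e \<Rightarrow> e) w)) id)
     else 0)"

end

theory Submission
  imports Defs
begin

text \<open>
  For a word \<open>\<epsilon>\<^sub>1 \<dots> \<epsilon>\<^sub>n\<close> of directed edges, \<open>Tr(X\<^sub>\<epsilon>\<^sub>1 \<dots> X\<^sub>\<epsilon>\<^sub>n)\<close> is \<open>\<mu>(\<alpha>)\<close> times
  the vacuum-to-vacuum amplitude \<open>A(\<alpha>)(\<epsilon>\<^sub>1 \<dots> \<epsilon>\<^sub>n)\<close> of a stack process: applied to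
  \<open>p\<^sub>\<alpha>\<close>, each letter either pushes itself onto the tensor or pops its reverse edge.
  In a closed history the first letter \<open>\<epsilon>\<^sub>1\<close> pops the copy of \<open>\<epsilon>\<^sub>1\<^sup>o\<^sup>p\<close> pushed by some
  later letter \<open>\<epsilon>\<^sub>i\<close>; the letters in between form a closed history based at \<open>t(\<epsilon>\<^sub>1)\<close>,
  the letters after \<open>\<epsilon>\<^sub>i\<close> one based at \<open>\<alpha>\<close>. Hence the generating series satisfy
  the first-return equations \<open>A(y) = 1 + (\<Sum>s(e) = y. c(e) \<cdot> e A(t(e)) e\<^sup>o\<^sup>p A(y))\<close> with
  \<open>c(e) = a(e)\<^sup>-\<^sup>1 a(e\<^sup>o\<^sup>p)\<close>. Substituting \<open>A(y) = 1 + F(y)\<close> and expanding gives a proper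
  algebraic system in the finitely many unknowns \<open>F(y)\<close> and \<open>\<mu>(\<alpha>) F(\<alpha>)\<close>.
\<close>

lemma ncs_mult_letter_Nil [simp]: "ncs_mult (ncs_letter x) P [] = 0"
  by (simp add: ncs_mult_def ncs_letter_def)

lemma ncs_mult_letter_Cons [simp]:
  "ncs_mult (ncs_letter x) P (b # w) = (if b = x then P w else 0)"
proof -
  have "ncs_mult (ncs_letter x) P (b # w) =
      (\<Sum>i\<le>length w. if i = 0 \<and> b = x then P w else 0)"
    unfolding ncs_mult_def ncs_letter_def length_Cons sum.atMost_Suc_shift
    by (auto intro!: sum.cong)
  then show ?thesis by simp
qed

lemma ncs_mult_one_left [simp]: "ncs_mult ncs_one P = P"
proof
  fix w
  have "ncs_mult ncs_one P w = (\<Sum>i\<le>length w. if i = 0 then P w else 0)"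
    unfolding ncs_mult_def ncs_one_def by (rule sum.cong) auto
  then show "ncs_mult ncs_one P w = P w" by simp
qed

lemma ncs_mult_one_right [simp]: "ncs_mult P ncs_one = P"
proof
  fix w
  have "ncs_mult P ncs_one w = (\<Sum>i\<le>length w. if i = length w then P w else 0)"
    unfolding ncs_mult_def ncs_one_def by (rule sum.cong) auto
  then show "ncs_mult P ncs_one w = P w" by simp
qed

lemma ncs_mult_sum_left:
  "ncs_mult (\<lambda>w. \<Sum>i\<in>I. P i w) Q = (\<lambda>w. \<Sum>i\<in>I. ncs_mult (P i) Q w)"
  unfolding ncs_mult_def by (simp add: sum_distrib_right sum.swap[of _ I])

lemma ncs_mult_sum_right:
  "ncs_mult P (\<lambda>w. \<Sum>i\<in>I. Q i w) = (\<lambda>w. \<Sum>i\<in>I. ncs_mult P (Q i) w)"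
  unfolding ncs_mult_def by (simp add: sum_distrib_left sum.swap[of _ I])

lemma ncs_mult_letter_middle:
  "ncs_mult P (ncs_mult (ncs_letter x) Q) w =
     (\<Sum>i<length w. if w ! i = x then P (take i w) * Q (drop (Suc i) w) else 0)"
proof -
  have "ncs_mult P (ncs_mult (ncs_letter x) Q) w =
      (\<Sum>i<length w. P (take i w) * ncs_mult (ncs_letter x) Q (drop i w))"
    by (simp add: ncs_mult_def[of P] lessThan_Suc_atMost[symmetric])
  also have "\<dots> = (\<Sum>i<length w. if w ! i = x then P (take i w) * Q (drop (Suc i) w) else 0)"
    by (rule sum.cong) (simp_all add: Cons_nth_drop_Suc[symmetric])
  finally show ?thesis .
qed

definition ncs_supported_on :: "'x set \<Rightarrow> ('x, 'r::comm_ring_1) ncseries \<Rightarrow> bool" where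
  "ncs_supported_on A P \<longleftrightarrow> (\<forall>w. P w \<noteq> 0 \<longrightarrow> set w \<subseteq> A)"

lemma ncs_supported_on_one: "ncs_supported_on A ncs_one"
  by (simp add: ncs_supported_on_def ncs_one_def)

lemma ncs_supported_on_letter: "x \<in> A \<Longrightarrow> ncs_supported_on A (ncs_letter x)"
  by (simp add: ncs_supported_on_def ncs_letter_def)

lemma ncs_supported_on_mult:
  assumes "ncs_supported_on A P" "ncs_supported_on A Q"
  shows "ncs_supported_on A (ncs_mult P Q)"
  unfolding ncs_supported_on_def
proof (intro allI impI)
  fix w assume "ncs_mult P Q w \<noteq> 0"
  then obtain i where "P (take i w) * Q (drop i w) \<noteq> 0"
    unfolding ncs_mult_def by (meson sum.not_neutral_contains_not_neutral)
  then have "P (take i w) \<noteq> 0" "Q (drop i w) \<noteq> 0" by auto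
  then have "set (take i w) \<subseteq> A" "set (drop i w) \<subseteq> A"
    using assms unfolding ncs_supported_on_def by auto
  then show "set w \<subseteq> A" by (metis append_take_drop_id le_sup_iff set_append)
qed

lemma ncs_supported_on_add:
  "ncs_supported_on A P \<Longrightarrow> ncs_supported_on A Q \<Longrightarrow> ncs_supported_on A (\<lambda>w. P w + Q w)"
  unfolding ncs_supported_on_def by force

lemma ncs_supported_on_sum:
  assumes "\<And>i. i \<in> I \<Longrightarrow> ncs_supported_on A (P i)"
  shows "ncs_supported_on A (\<lambda>w. \<Sum>i\<in>I. c i * P i w)"
  unfolding ncs_supported_on_def
proof (intro allI impI)
  fix w assume "(\<Sum>i\<in>I. c i * P i w) \<noteq> 0"
  then obtain i where "i \<in> I" "c i * P i w \<noteq> 0"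
    by (meson sum.not_neutral_contains_not_neutral)
  moreover from this(2) have "P i w \<noteq> 0" by (rule contrapos_nn) simp
  ultimately show "set w \<subseteq> A"
    using assms unfolding ncs_supported_on_def by auto
qed

lemma ncs_supported_on_range_eqI:
  assumes "ncs_supported_on (range f) P" "ncs_supported_on (range f) Q"
    and "\<And>xs. P (map f xs) = Q (map f xs)"
  shows "P = Q"
proof
  fix w
  show "P w = Q w"
  proof (cases "set w \<subseteq> range f")
    case True
    then obtain xs where "w = map f xs"
      using ex_map_conv[of w f] by blast
    then show ?thesis using assms(3) by simp
  next
    case False
    then show ?thesis using assms(1,2) unfolding ncs_supported_on_def by metis
  qed
qed

lemma ncs_word_eval_map: "ncs_word_eval \<sigma> (map f u) = ncs_word_eval (\<sigma> \<circ> f) u"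
  by (induction u) simp_all

lemma ncs_subst_map:
  assumes "inj f" and "\<And>u. q (map f u) = p u" and "{u. q u \<noteq> 0} \<subseteq> range (map f)"
  shows "ncs_subst q \<sigma> = ncs_subst p (\<sigma> \<circ> f)"
proof
  fix w
  have supp: "{u. q u \<noteq> 0} = map f ` {u. p u \<noteq> 0}"
    using assms(2,3) by auto
  have "inj_on (map f) {u. p u \<noteq> 0}"
    using inj_on_subset[OF inj_mapI[OF assms(1)]] by blast
  then show "ncs_subst q \<sigma> w = ncs_subst p (\<sigma> \<circ> f) w"
    unfolding ncs_subst_def supp by (simp add: sum.reindex assms(2) ncs_word_eval_map)
qed

lemma ncs_subst_linear_combination:
  assumes "finite E"
  shows "ncs_subst (\<lambda>u. \<Sum>q\<in>E. c q * (if u = m q then 1 else 0)) \<sigma> w =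
           (\<Sum>q\<in>E. c q * ncs_word_eval \<sigma> (m q) w)"
proof -
  let ?p = "\<lambda>u. \<Sum>q\<in>E. c q * (if u = m q then 1 else 0)"
  have "?p u = 0" if "u \<notin> m ` E" for u
    using that by (auto intro!: sum.neutral)
  then have "ncs_subst ?p \<sigma> w = (\<Sum>u\<in>m ` E. ?p u * ncs_word_eval \<sigma> u w)"
    unfolding ncs_subst_def by (intro sum.mono_neutral_left) (auto simp: assms)
  also have "\<dots> = (\<Sum>u\<in>m ` E. \<Sum>q\<in>E. if u = m q then c q * ncs_word_eval \<sigma> (m q) w else 0)"
    by (auto simp: sum_distrib_right intro!: sum.cong)
  also have "\<dots> = (\<Sum>q\<in>E. c q * ncs_word_eval \<sigma> (m q) w)"
    by (subst sum.swap) (simp add: assms)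
  finally show ?thesis .
qed

lemma nc_algebraic_cong:
  assumes "\<And>w. w \<noteq> [] \<Longrightarrow> P w = P' w"
  shows "nc_algebraic P \<longleftrightarrow> nc_algebraic P'"
proof -
  have "(\<lambda>w. if w = [] then 0 else P w) = (\<lambda>w. if w = [] then 0 else P' w)"
    using assms by auto
  then show ?thesis by (simp add: nc_algebraic_def)
qed

definition renumber_system ::
    "(nat \<Rightarrow> 'z) \<Rightarrow> ('z \<Rightarrow> nat) \<Rightarrow> ('z \<Rightarrow> ('x + 'z) list \<Rightarrow> 'r::comm_ring_1)
      \<Rightarrow> nat \<Rightarrow> ('x + nat) list \<Rightarrow> 'r" where
  "renumber_system enum index p i u =
     (if set u \<subseteq> range (map_sum id index) then p (enum i) (map (map_sum id enum) u) else 0)"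

context
  fixes enum :: "nat \<Rightarrow> 'z" and index :: "'z \<Rightarrow> nat"
  assumes enum_index: "\<And>z. enum (index z) = z"
begin

lemma map_sum_enum_index: "map_sum id enum (map_sum id index l) = l"
  by (cases l) (simp_all add: enum_index)

lemma inj_map_sum_index: "inj (map_sum id index)"
  using map_sum_enum_index by (rule inj_on_inverseI)

lemma renumber_system_map:
  "renumber_system enum index p i (map (map_sum id index) u) = p (enum i) u"
proof -
  have "map (map_sum id enum) (map (map_sum id index) u) = u"
    unfolding map_map comp_def by (rule map_idI) (rule map_sum_enum_index)
  then show ?thesis
    unfolding renumber_system_def by auto
qed

lemma renumber_system_support:
  "{u. renumber_system enum index p i u \<noteq> 0} \<subseteq> range (map (map_sum id index))"
proof
  fix u assume "u \<in> {u. renumber_system enum index p i u \<noteq> 0}"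
  then have "\<forall>l\<in>set u. \<exists>l'. l = map_sum id index l'"
    by (auto simp: renumber_system_def split: if_splits)
  then show "u \<in> range (map (map_sum id index))"
    by (auto simp flip: ex_map_conv)
qed

lemma proper_alg_system_renumber_system:
  fixes p :: "'z \<Rightarrow> ('x + 'z) list \<Rightarrow> 'r::comm_ring_1"
  assumes "\<And>z. index z < m" and "\<And>z. finite {u. p z u \<noteq> 0}"
    and "\<And>z. p z [] = 0" and "\<And>z z'. p z [Inr z'] = 0"
  shows "proper_alg_system m (renumber_system enum index p)"
  unfolding proper_alg_system_def
proof (intro allI impI conjI)
  fix i
  have "{u. renumber_system enum index p i u \<noteq> 0} \<subseteq> map (map_sum id index) ` {u. p (enum i) u \<noteq> 0}"
  proof
    fix u assume "u \<in> {u. renumber_system enum index p i u \<noteq> 0}"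
    then obtain u' where "u = map (map_sum id index) u'"
      using renumber_system_support by blast
    with \<open>u \<in> _\<close> show "u \<in> map (map_sum id index) ` {u. p (enum i) u \<noteq> 0}"
      by (simp add: renumber_system_map)
  qed
  then show "finite {u. renumber_system enum index p i u \<noteq> 0}"
    using assms(2) by (rule finite_subset[OF _ finite_imageI])
  show "j < m" if nonzero: "renumber_system enum index p i u \<noteq> 0" and var: "Inr j \<in> set u" for u j
  proof -
    have "set u \<subseteq> range (map_sum id index)"
      using nonzero by (auto simp: renumber_system_def split: if_splits)
    then obtain l :: "'x + 'z" where "Inr j = map_sum id index l"
      using var by (meson rangeE subsetD)
    then show "j < m"
      using assms(1) by (cases l) simp_all
  qed
  show "renumber_system enum index p i [] = 0" "renumber_system enum index p i [Inr j] = 0" for j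
    by (simp_all add: renumber_system_def assms(3,4))
qed

lemma is_alg_solution_renumber_system:
  assumes sol: "\<And>z. Q z = ncs_subst (p z) (case_sum ncs_letter Q)" and "\<And>z. Q z [] = 0"
  shows "is_alg_solution m (renumber_system enum index p) (Q \<circ> enum)"
  unfolding is_alg_solution_def
proof (intro allI impI conjI)
  fix i
  have "ncs_subst (renumber_system enum index p i) (case_sum ncs_letter (Q \<circ> enum)) =
      ncs_subst (p (enum i)) (case_sum ncs_letter (Q \<circ> enum) \<circ> map_sum id index)"
    by (rule ncs_subst_map[OF inj_map_sum_index renumber_system_map renumber_system_support])
  also have "case_sum ncs_letter (Q \<circ> enum) \<circ> map_sum id index = case_sum ncs_letter Q"
    by (auto simp: enum_index split: sum.split)
  also have "ncs_subst (p (enum i)) (case_sum ncs_letter Q) = Q (enum i)"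
    by (rule sol[symmetric])
  finally have "ncs_subst (renumber_system enum index p i) (case_sum ncs_letter (Q \<circ> enum)) = Q (enum i)" .
  then show "(Q \<circ> enum) i = ncs_subst (renumber_system enum index p i)
      (\<lambda>l. case l of Inl x \<Rightarrow> ncs_letter x | Inr j \<Rightarrow> (Q \<circ> enum) j)"
    by simp
  show "(Q \<circ> enum) i [] = 0"
    by (simp add: assms(2))
qed

end

lemma nc_algebraic_of_finite_system:
  fixes p :: "'z::finite \<Rightarrow> ('x + 'z) list \<Rightarrow> 'r::comm_ring_1"
    and Q :: "'z \<Rightarrow> ('x, 'r) ncseries"
  assumes "\<And>z. finite {u. p z u \<noteq> 0}"
    and "\<And>z. p z [] = 0" and "\<And>z z'. p z [Inr z'] = 0"
    and "\<And>z. Q z = ncs_subst (p z) (case_sum ncs_letter Q)"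
    and "\<And>z. Q z [] = 0"
  shows "nc_algebraic (Q z)"
proof -
  define m where "m = card (UNIV :: 'z set)"
  obtain enum :: "nat \<Rightarrow> 'z" where enum: "bij_betw enum {..<m} UNIV"
    using ex_bij_betw_nat_finite[of "UNIV :: 'z set"] by (auto simp: m_def atLeast0LessThan)
  define index where "index = inv_into {..<m} enum"
  have index: "index z < m" "enum (index z) = z" for z
    using bij_betwE[OF bij_betw_inv_into[OF enum]] bij_betw_inv_into_right[OF enum]
    by (simp_all add: index_def)
  have "proper_alg_system m (renumber_system enum index p)"
    by (rule proper_alg_system_renumber_system[OF index(2) index(1) assms(1-3)])
  moreover have "is_alg_solution m (renumber_system enum index p) (Q \<circ> enum)"
    by (rule is_alg_solution_renumber_system[OF index(2) assms(4,5)])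
  moreover have "(\<lambda>w. if w = [] then 0 else Q z w) = (Q \<circ> enum) (index z)"
    using assms(5) by (auto simp: index(2))
  ultimately show ?thesis
    unfolding nc_algebraic_def using index(1) by blast
qed

lemma sum_lessThan_triangle_swap:
  "(\<Sum>i<n. \<Sum>j<i. g j i) = (\<Sum>j<n. \<Sum>k<n - Suc j. g j (Suc (j + k)) :: 'a::comm_monoid_add)"
proof (induction n)
  case (Suc n)
  have "(\<Sum>k<Suc n - Suc j. g j (Suc (j + k))) = (\<Sum>k<n - Suc j. g j (Suc (j + k))) + g j n"
    if "j < n" for j
    using that by (simp add: Suc_diff_Suc[OF that, symmetric])
  then have "(\<Sum>j<Suc n. \<Sum>k<Suc n - Suc j. g j (Suc (j + k))) =
      (\<Sum>j<n. (\<Sum>k<n - Suc j. g j (Suc (j + k))) + g j n)"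
    by simp
  then show ?case using Suc by (simp add: sum.distrib)
qed simp

section \<open>Amplitudes of words in the operators \<open>X\<^sub>\<epsilon>\<close>\<close>

locale fock_graph =
  fixes \<mu> :: "'v::finite \<Rightarrow> real" and src tgt :: "'e::finite \<Rightarrow> 'v" and opp :: "'e \<Rightarrow> 'e"
  assumes graph: "graph_ok src tgt opp" and weight_pos: "\<And>v. \<mu> v > 0"
begin

abbreviation a :: "'e \<Rightarrow> complex" where "a \<equiv> edge_a \<mu> src tgt"

lemma opp_opp [simp]: "opp (opp e) = e"
  and src_opp [simp]: "src (opp e) = tgt e"
  and tgt_opp [simp]: "tgt (opp e) = src e"
  and opp_eq_iff: "opp e = e \<longleftrightarrow> src e = tgt e"
  using graph unfolding graph_ok_def by auto

lemma edge_a_loop: "src e = tgt e \<Longrightarrow> a e = 1"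
  using weight_pos[of "src e"] by (simp add: edge_a_def)

text \<open>Both cases of \<open>X_edge\<close> have this shape: for a loop \<open>opp \<epsilon> = \<epsilon>\<close> and \<open>a \<epsilon> = 1\<close>.\<close>

lemma X_dir_apply:
  "X_dir \<mu> src tgt opp \<epsilon> f (ws, v) =
   (if fock_start src (ws, v) = src \<epsilon> then
      a \<epsilon> * (case ws of [] \<Rightarrow> 0 | e # ws' \<Rightarrow>
          if e = \<epsilon> \<and> tgt \<epsilon> = fock_start src (ws', v) then f (ws', v) else 0)
      + inverse (a \<epsilon>) * f (opp \<epsilon> # ws, v)
    else 0)"
proof (cases "src \<epsilon> = tgt \<epsilon>")
  case True
  then show ?thesis using opp_eq_iff[of \<epsilon>] edge_a_loop[OF True]
    by (auto simp: X_dir_def X_edge_def fproj_def fcreate_def fannih_def fock_start_def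
        split: list.splits)
next
  case False
  then show ?thesis using opp_eq_iff[of \<epsilon>]
    by (auto simp: X_dir_def X_edge_def fproj_def fcreate_def fannih_def fock_start_def Let_def
        split: list.splits)
qed

text \<open>\<open>amp v es ws\<close> is the coefficient of the basis vector \<open>(ws, v)\<close> in
  \<open>X\<^sub>e\<^sub>1 \<dots> X\<^sub>e\<^sub>n p\<^sub>v\<close> for \<open>es = [e\<^sub>1, \<dots>, e\<^sub>n]\<close>; \<open>ws\<close> is the stack of pushed edges.\<close>

fun amp :: "'v \<Rightarrow> 'e list \<Rightarrow> 'e list \<Rightarrow> complex" where
  "amp v [] ws = (if ws = [] then 1 else 0)"
| "amp v (e # es) ws = (if fock_start src (ws, v) = src e then
      a e * (case ws of [] \<Rightarrow> 0 | e' # ws' \<Rightarrow>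
          if e' = e \<and> tgt e = fock_start src (ws', v) then amp v es ws' else 0)
      + inverse (a e) * amp v es (opp e # ws)
    else 0)"

lemma X_dir_word_apply_basis:
  "foldr (\<circ>) (map (X_dir \<mu> src tgt opp) es) id (fbasis ([], v)) (ws, v) = amp v es ws"
  by (induction es arbitrary: ws) (simp_all add: fbasis_def X_dir_apply split: list.splits)

lemma fTr_X_dir_word:
  assumes "es \<noteq> []"
  shows "fTr \<mu> (foldr (\<circ>) (map (X_dir \<mu> src tgt opp) es) id) =
    \<mu> (src (hd es)) * amp (src (hd es)) es []"
proof -
  have "amp v es [] = 0" if "v \<noteq> src (hd es)" for v
    using assms that by (cases es) (simp_all add: fock_start_def)
  then show ?thesis
    unfolding fTr_def X_dir_word_apply_basis by (subst sum.remove[of _ "src (hd es)"]) auto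
qed

text \<open>The top edge \<open>h\<close> of the final stack was pushed by the letter \<open>u ! i\<close>, after which
  the letters \<open>take i u\<close> form a closed history above it.\<close>

definition amp_top_decomposes :: "'e list \<Rightarrow> bool" where
  "amp_top_decomposes u \<longleftrightarrow> (\<forall>v h ws. amp v u (h # ws) =
     (\<Sum>i<length u. if u ! i = h then amp (src h) (take i u) [] *
        (a h * (if tgt h = fock_start src (ws, v) then amp v (drop (Suc i) u) ws else 0)) else 0))"

lemma amp_first_return_of:
  assumes "amp_top_decomposes u"
  shows "amp v (e # u) [] = (if src e = v then inverse (a e) *
     (\<Sum>i<length u. if u ! i = opp e then
        amp (tgt e) (take i u) [] * (a (opp e) * amp v (drop (Suc i) u) []) else 0) else 0)"
proof -
  have "amp v u [opp e] = (\<Sum>i<length u. if u ! i = opp e then amp (tgt e) (take i u) [] *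
     (a (opp e) * (if src e = v then amp v (drop (Suc i) u) [] else 0)) else 0)"
    using assms unfolding amp_top_decomposes_def by (simp add: fock_start_def cong: if_cong)
  then show ?thesis
    by (simp add: fock_start_def sum_distrib_left if_distrib cong: if_cong)
qed

lemma amp_two_tops:
  assumes IH: "\<And>w. length w \<le> length u \<Longrightarrow> amp_top_decomposes w"
  shows "amp v u (g # h # ws) = (if tgt g = src h then
     (\<Sum>i<length u. \<Sum>j<i. if u ! j = g \<and> u ! i = h then
        amp (src g) (take j u) [] * (a g * (amp (src h) (drop (Suc j) (take i u)) [] *
          (a h * (if tgt h = fock_start src (ws, v) then amp v (drop (Suc i) u) ws else 0))))
      else 0) else 0)"
proof -
  let ?C = "tgt h = fock_start src (ws, v)"
  let ?n = "length u"
  have inner: "amp v (drop (Suc j) u) (h # ws) = (\<Sum>k<?n - Suc j. if u ! Suc (j + k) = h then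
       amp (src h) (drop (Suc j) (take (Suc (j + k)) u)) [] *
         (a h * (if ?C then amp v (drop (Suc (Suc (j + k))) u) ws else 0)) else 0)" if "j < ?n" for j
    using IH[of "drop (Suc j) u", unfolded amp_top_decomposes_def, rule_format, of v h ws] that
    by (simp add: drop_take add.commute cong: if_cong)
  have "amp v u (g # h # ws) = (\<Sum>j<?n. if u ! j = g then amp (src g) (take j u) [] *
       (a g * (if tgt g = src h then amp v (drop (Suc j) u) (h # ws) else 0)) else 0)"
    using IH[of u, unfolded amp_top_decomposes_def, rule_format, of v g "h # ws"]
    by (simp add: fock_start_def cong: if_cong)
  also have "\<dots> = (if tgt g = src h then (\<Sum>j<?n. \<Sum>k<?n - Suc j.
       if u ! j = g \<and> u ! Suc (j + k) = h then amp (src g) (take j u) [] *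
         (a g * (amp (src h) (drop (Suc j) (take (Suc (j + k)) u)) [] *
           (a h * (if ?C then amp v (drop (Suc (Suc (j + k))) u) ws else 0)))) else 0) else 0)"
  proof (cases "tgt g = src h")
    case True
    have pointwise: "(if u ! j = g then
         amp (src g) (take j u) [] * (a g * amp v (drop (Suc j) u) (h # ws)) else 0)
       = (\<Sum>k<?n - Suc j. if u ! j = g \<and> u ! Suc (j + k) = h then amp (src g) (take j u) [] *
         (a g * (amp (src h) (drop (Suc j) (take (Suc (j + k)) u)) [] *
           (a h * (if ?C then amp v (drop (Suc (Suc (j + k))) u) ws else 0)))) else 0)"
      if "j < ?n" for j
      using that by (cases "u ! j = g") (auto simp: inner sum_distrib_left intro!: sum.cong)
    show ?thesis
      using True by (simp add: pointwise cong: if_cong)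
  qed (auto intro!: sum.neutral)
  finally show ?thesis
    by (simp only: sum_lessThan_triangle_swap)
qed

lemma amp_first_return_take:
  assumes IH: "\<And>w. length w \<le> length u \<Longrightarrow> amp_top_decomposes w" and "i < length u"
  shows "amp x (e # take i u) [] = (if src e = x then inverse (a e) *
      (\<Sum>j<i. if u ! j = opp e then amp (tgt e) (take j u) [] *
         (a (opp e) * amp x (drop (Suc j) (take i u)) []) else 0) else 0)"
  using amp_first_return_of[of "take i u" x e, OF IH] assms(2)
  by (simp add: min_absorb2 cong: if_cong)

lemma amp_top_decomposes_Cons:
  assumes IH: "\<And>w. length w \<le> length u \<Longrightarrow> amp_top_decomposes w"
  shows "amp_top_decomposes (e # u)"
  unfolding amp_top_decomposes_def
proof (intro allI)
  fix v h ws
  let ?n = "length u"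
  let ?C = "tgt h = fock_start src (ws, v)"
  let ?tail = "\<lambda>i. if ?C then amp v (drop (Suc i) u) ws else 0"
  let ?G = "\<lambda>j i. if u ! j = opp e \<and> u ! i = h then amp (tgt e) (take j u) [] *
      (a (opp e) * (amp (src h) (drop (Suc j) (take i u)) [] * (a h * ?tail i))) else 0"
  have later_pushes: "(\<Sum>i<?n. if u ! i = h then amp (src h) (e # take i u) [] * (a h * ?tail i) else 0)
      = (if src e = src h then inverse (a e) * (\<Sum>i<?n. \<Sum>j<i. ?G j i) else 0)"
  proof (cases "src e = src h")
    case True
    have "(if u ! i = h then amp (src h) (e # take i u) [] * (a h * ?tail i) else 0)
        = inverse (a e) * (\<Sum>j<i. ?G j i)" if "i < ?n" for i
      using True amp_first_return_take[OF IH that, of "src h" e]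
      by (auto simp: sum_distrib_left sum_distrib_right mult_ac simp del: amp.simps
          cong: if_cong intro!: sum.cong)
    then show ?thesis
      using True by (simp add: sum_distrib_left)
  next
    case False
    then show ?thesis
      by (auto simp: amp_first_return_take[OF IH] simp del: amp.simps intro!: sum.neutral)
  qed
  have "amp v (e # u) (h # ws) = (if src h = src e then a e * (if e = h \<and> ?C then amp v u ws else 0)
      + inverse (a e) * amp v u (opp e # h # ws) else 0)"
    by (simp add: fock_start_def)
  also have "\<dots> = (if src h = src e then a e * (if e = h \<and> ?C then amp v u ws else 0)
      + inverse (a e) * (\<Sum>i<?n. \<Sum>j<i. ?G j i) else 0)"
    using amp_two_tops[of u v "opp e" h ws, OF IH] by (simp cong: if_cong)
  also have "\<dots> = (if e = h then a h * (if ?C then amp v u ws else 0) else 0) +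
      (\<Sum>i<?n. if u ! i = h then amp (src h) (e # take i u) [] * (a h * ?tail i) else 0)"
    unfolding later_pushes by auto
  also have "\<dots> = (\<Sum>i<length (e # u). if (e # u) ! i = h then amp (src h) (take i (e # u)) [] *
      (a h * (if ?C then amp v (drop (Suc i) (e # u)) ws else 0)) else 0)"
    unfolding length_Cons sum.lessThan_Suc_shift by (simp del: amp.simps(2) cong: if_cong)
  finally show "amp v (e # u) (h # ws) = \<dots>" .
qed

lemma amp_top_decomposes_all: "amp_top_decomposes u"
proof (induction "length u" arbitrary: u rule: less_induct)
  case less
  show ?case
  proof (cases u)
    case (Cons e u')
    have "amp_top_decomposes w" if "length w \<le> length u'" for w
      using less.hyps that Cons by simp
    then show ?thesis
      unfolding Cons by (rule amp_top_decomposes_Cons)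
  qed (simp add: amp_top_decomposes_def)
qed

lemma amp_first_return:
  "amp v (e # u) [] = (if src e = v then inverse (a e) *
     (\<Sum>i<length u. if u ! i = opp e then
        amp (tgt e) (take i u) [] * (a (opp e) * amp v (drop (Suc i) u) []) else 0) else 0)"
  by (rule amp_first_return_of[OF amp_top_decomposes_all])

fun walk :: "'v \<Rightarrow> 'e list \<Rightarrow> 'v \<Rightarrow> bool" where
  "walk x [] y \<longleftrightarrow> x = y"
| "walk x (e # es) y \<longleftrightarrow> src e = x \<and> walk (tgt e) es y"

lemma walk_append: "walk x (p @ q) z \<longleftrightarrow> (\<exists>y. walk x p y \<and> walk y q z)"
  by (induction p arbitrary: x) auto

lemma walk_imp_is_loop_at:
  assumes "walk x es x" and "es \<noteq> []"
  shows "is_loop_at src tgt x es"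
proof -
  have "src (hd es) = x \<and> tgt (last es) = y \<and>
      (\<forall>k. Suc k < length es \<longrightarrow> tgt (es ! k) = src (es ! Suc k))"
    if "walk x es y" "es \<noteq> []" for x y
    using that
  proof (induction es arbitrary: x)
    case (Cons e es)
    then show ?case
      by (cases es) (auto simp: nth_Cons split: nat.split)
  qed simp
  then show ?thesis
    using assms unfolding is_loop_at_def by blast
qed

lemma amp_nonzero_imp_walk: "amp v es [] \<noteq> 0 \<Longrightarrow> walk v es v"
proof (induction "length es" arbitrary: es v rule: less_induct)
  case less
  show ?case
  proof (cases es)
    case (Cons e u)
    have nonzero: "amp v (e # u) [] \<noteq> 0"
      using less.prems Cons by simp
    then have "src e = v"
      by (rule contrapos_np) (simp add: amp_first_return del: amp.simps)
    moreover have "(\<Sum>i<length u. if u ! i = opp e then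
        amp (tgt e) (take i u) [] * (a (opp e) * amp v (drop (Suc i) u) []) else 0) \<noteq> 0"
      using nonzero by (simp add: amp_first_return del: amp.simps split: if_splits)
    then obtain i where "i < length u" "u ! i = opp e"
        "amp (tgt e) (take i u) [] \<noteq> 0" "amp v (drop (Suc i) u) [] \<noteq> 0"
      by (rule sum.not_neutral_contains_not_neutral) (simp split: if_splits del: amp.simps)
    moreover note less.hyps[of "take i u" "tgt e"] less.hyps[of "drop (Suc i) u" v]
    ultimately have "walk v (e # take i u @ u ! i # drop (Suc i) u) v"
      using Cons by (simp add: walk_append)
    then show ?thesis
      using Cons \<open>i < length u\<close> by (simp add: id_take_nth_drop[symmetric])
  qed simp
qed

end

section \<open>The first-return system\<close>

context fock_graph
begin

definition amp_series :: "'v \<Rightarrow> ('e, 'v) gletter list \<Rightarrow> complex" where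
  "amp_series y w =
     (if set w \<subseteq> range ELet then amp y (map (\<lambda>l. case l of ELet e \<Rightarrow> e) w) [] else 0)"

lemma amp_series_map_ELet [simp]: "amp_series y (map ELet es) = amp y es []"
  by (auto simp: amp_series_def comp_def)

lemma amp_series_supported: "ncs_supported_on (range ELet) (amp_series y)"
  by (simp add: ncs_supported_on_def amp_series_def)

definition edge_coeff :: "'e \<Rightarrow> complex" where
  "edge_coeff e = inverse (a e) * a (opp e)"

lemma amp_series_first_return:
  "amp_series y = (\<lambda>w. ncs_one w + (\<Sum>e\<in>{e. src e = y}. edge_coeff e *
      ncs_mult (ncs_letter (ELet e)) (ncs_mult (amp_series (tgt e))
        (ncs_mult (ncs_letter (ELet (opp e))) (amp_series y))) w))"
  (is "_ = ?R")
proof (rule ncs_supported_on_range_eqI)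
  show "ncs_supported_on (range ELet) (amp_series y)"
    by (rule amp_series_supported)
  show "ncs_supported_on (range ELet) ?R"
    by (intro ncs_supported_on_add ncs_supported_on_sum ncs_supported_on_one
        ncs_supported_on_mult ncs_supported_on_letter amp_series_supported) simp_all
  show "amp_series y (map ELet es) = ?R (map ELet es)" for es
  proof (cases es)
    case Nil
    then show ?thesis by (simp add: ncs_one_def amp_series_def)
  next
    case (Cons e0 es')
    have "?R (map ELet es) = (if src e0 = y then edge_coeff e0 * ncs_mult (amp_series (tgt e0))
        (ncs_mult (ncs_letter (ELet (opp e0))) (amp_series y)) (map ELet es') else 0)"
      by (simp add: Cons ncs_one_def if_distrib[of "\<lambda>x. _ * x"] cong: if_cong)
    also have "\<dots> = amp y es []"
      by (auto simp: Cons amp_first_return ncs_mult_letter_middle edge_coeff_def take_map drop_map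
          sum_distrib_left mult_ac simp del: amp.simps intro!: sum.cong)
    finally show ?thesis by simp
  qed
qed

definition loop_series :: "'v \<Rightarrow> ('e, 'v) gletter list \<Rightarrow> complex" where
  "loop_series y w = amp_series y w - ncs_one w"

lemma loop_series_Nil: "loop_series y [] = 0"
  by (simp add: loop_series_def amp_series_def ncs_one_def)

definition optional_loop :: "bool \<Rightarrow> 'v \<Rightarrow> ('e, 'v) gletter list \<Rightarrow> complex" where
  "optional_loop b y = (if b then loop_series y else ncs_one)"

lemma amp_series_eq_sum_optional_loop: "amp_series y = (\<lambda>w. \<Sum>b\<in>UNIV. optional_loop b y w)"
  by (simp add: UNIV_bool optional_loop_def loop_series_def)

definition optional_var :: "bool \<Rightarrow> 'v \<Rightarrow> (('e, 'v) gletter + 'v option) list" where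
  "optional_var b y = (if b then [Inr (Some y)] else [])"

text \<open>The monomials of \<open>e (1 + z(t(e))) e\<^sup>o\<^sup>p (1 + z(s(e)))\<close>: each flag chooses
  between \<open>1\<close> and the unknown.\<close>

fun loop_monomial :: "'e \<times> bool \<times> bool \<Rightarrow> (('e, 'v) gletter + 'v option) list" where
  "loop_monomial (e, b, b') =
     Inl (ELet e) # optional_var b (tgt e) @ Inl (ELet (opp e)) # optional_var b' (src e)"

definition loop_polynomial :: "complex \<Rightarrow> 'v \<Rightarrow> (('e, 'v) gletter + 'v option) list \<Rightarrow> complex" where
  "loop_polynomial c y u = (\<Sum>q\<in>{e. src e = y} \<times> UNIV.
     c * edge_coeff (fst q) * (if u = loop_monomial q then 1 else 0))"

lemma loop_polynomial_eq_0: "u \<notin> range loop_monomial \<Longrightarrow> loop_polynomial c y u = 0"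
  unfolding loop_polynomial_def by (rule sum.neutral) (auto simp del: loop_monomial.simps)

lemma loop_polynomial_Nil: "loop_polynomial c y [] = 0"
  and loop_polynomial_variable: "loop_polynomial c y [Inr z] = 0"
  unfolding loop_polynomial_def by (auto intro!: sum.neutral)

lemma finite_loop_polynomial_support: "finite {u. loop_polynomial c y u \<noteq> 0}"
proof (rule finite_subset)
  show "{u. loop_polynomial c y u \<noteq> 0} \<subseteq> range loop_monomial"
    using loop_polynomial_eq_0 by blast
qed (simp add: finite_imageI)

lemma ncs_word_eval_loop_monomial:
  assumes "\<And>x. \<sigma> (Inl x) = ncs_letter x" and "\<And>y. \<sigma> (Inr (Some y)) = loop_series y"
  shows "ncs_word_eval \<sigma> (loop_monomial (e, b, b')) =
    ncs_mult (ncs_letter (ELet e)) (ncs_mult (optional_loop b (tgt e))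
      (ncs_mult (ncs_letter (ELet (opp e))) (optional_loop b' (src e))))"
  by (cases b; cases b') (simp_all add: assms optional_var_def optional_loop_def)

lemma ncs_subst_loop_polynomial:
  assumes "\<And>x. \<sigma> (Inl x) = ncs_letter x" and "\<And>y. \<sigma> (Inr (Some y)) = loop_series y"
  shows "ncs_subst (loop_polynomial c y) \<sigma> w = c * loop_series y w"
proof -
  have "c * loop_series y w = c * (\<Sum>e\<in>{e. src e = y}. edge_coeff e *
      ncs_mult (ncs_letter (ELet e)) (ncs_mult (amp_series (tgt e))
        (ncs_mult (ncs_letter (ELet (opp e))) (amp_series y))) w)"
    using fun_cong[OF amp_series_first_return[of y], of w] by (simp add: loop_series_def)
  also have "\<dots> = (\<Sum>e\<in>{e. src e = y}. \<Sum>b\<in>UNIV. \<Sum>b'\<in>UNIV. c * edge_coeff e *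
      ncs_word_eval \<sigma> (loop_monomial (e, b, b')) w)"
    by (auto simp: amp_series_eq_sum_optional_loop ncs_mult_sum_left ncs_mult_sum_right
        ncs_word_eval_loop_monomial[OF assms] sum_distrib_left mult.assoc
        simp del: loop_monomial.simps intro!: sum.cong)
  also have "\<dots> = ncs_subst (loop_polynomial c y) \<sigma> w"
    unfolding loop_polynomial_def
    by (subst ncs_subst_linear_combination)
      (simp_all add: sum.cartesian_product split_def del: loop_monomial.simps)
  finally show ?thesis ..
qed

lemma P_series_eq_loop_series:
  assumes "w \<noteq> []"
  shows "P_series \<mu> src tgt opp \<alpha> w - complex_of_real (\<mu> \<alpha>) * ncs_letter (VLet \<alpha>) w =
    \<mu> \<alpha> * loop_series \<alpha> w"
proof (cases "\<exists>es. w = map ELet es \<and> is_loop_at src tgt \<alpha> es")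
  case True
  then obtain es where w: "w = map ELet es" and loop: "is_loop_at src tgt \<alpha> es"
    by blast
  then have "es \<noteq> []" "src (hd es) = \<alpha>"
    unfolding is_loop_at_def by auto
  then show ?thesis
    using True by (auto simp: w P_series_def ncs_letter_def loop_series_def ncs_one_def
        fTr_X_dir_word comp_def)
next
  case not_loop: False
  have "amp_series \<alpha> w = 0"
  proof (cases "set w \<subseteq> range ELet")
    case True
    then obtain es where w: "w = map ELet es"
      using ex_map_conv[of w ELet] by blast
    have "\<not> walk \<alpha> es \<alpha>"
      using not_loop walk_imp_is_loop_at assms w by auto
    then show ?thesis
      using amp_nonzero_imp_walk w by auto
  qed (simp add: amp_series_def)
  then show ?thesis
    using not_loop assms
    by (auto simp: P_series_def ncs_letter_def loop_series_def ncs_one_def amp_series_def)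
qed

end

theorem lemma3p12:
  fixes \<mu> :: "'v::finite \<Rightarrow> real" and src tgt :: "'e::finite \<Rightarrow> 'v" and opp :: "'e \<Rightarrow> 'e"
    and \<alpha> :: 'v
  assumes "graph_ok src tgt opp"
    and "\<And>v. \<mu> v > 0"
  shows "nc_algebraic (\<lambda>w. P_series \<mu> src tgt opp \<alpha> w
            - complex_of_real (\<mu> \<alpha>) * ncs_letter (VLet \<alpha>) w)"
proof -
  interpret fock_graph \<mu> src tgt opp
    using assms by unfold_locales
  define Q where "Q z = (case z of None \<Rightarrow> (\<lambda>w. \<mu> \<alpha> * loop_series \<alpha> w)
    | Some y \<Rightarrow> loop_series y)" for z
  define p where "p z = (case z of None \<Rightarrow> loop_polynomial (\<mu> \<alpha>) \<alpha>
    | Some y \<Rightarrow> loop_polynomial 1 y)" for z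
  have "nc_algebraic (Q None)"
  proof (rule nc_algebraic_of_finite_system)
    show "finite {u. p z u \<noteq> 0}" "p z [] = 0" "p z [Inr z'] = 0" for z z'
      by (simp_all add: p_def finite_loop_polynomial_support loop_polynomial_Nil
          loop_polynomial_variable split: option.split)
    show "Q z = ncs_subst (p z) (case_sum ncs_letter Q)" "Q z [] = 0" for z
      by (auto simp: Q_def p_def ncs_subst_loop_polynomial loop_series_Nil split: option.split)
  qed
  moreover have "?thesis \<longleftrightarrow> nc_algebraic (Q None)"
    using P_series_eq_loop_series by (intro nc_algebraic_cong) (simp add: Q_def)
  ultimately show ?thesis by simp
qed

end
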